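(* Let $\Gamma$ be a marginal vector with strictly positive entries and fix an edge $ij\in\mathcal E$. The Bregman projections (with respect to $\Phi$) of $\Gamma$ onto the four affine sets below are given as follows, where in each case all components of $\Gamma$ not mentioned are unchanged. (a) If $\Gamma'=\mathcal P_{\mathcal X_{ij\to i}}(\Gamma)$, then for all $x_i,x_j\in\chi$: $\Gamma'_{ij}(x_i,x_j)=\Gamma_{ij}(x_i,x_j)\sqrt{\Gamma_i(x_i)/\sum_x\Gamma_{ij}(x_i,x)}$ and $\Gamma'_i(x_i)=\Gamma_i(x_i)\sqrt{\sum_x\Gamma_{ij}(x_i,x)/\Gamma_i(x_i)}$. (b) If $\Gamma'=\mathcal P_{\mathcal X_{ij,i}}(\Gamma)$, then $\Gamma'_i=\Gamma_i/\sum_x\Gamma_i(x)$ and $\Gamma'_{ij}=\Gamma_{ij}/\sum_{x_i,x_j}\Gamma_{ij}(x_i,x_j)$. (c) If $\Gamma'=\mathcal P_{\mathcal X_{ij\to j}}(\Gamma)$, then for all $x_i,x_j\in\chi$: $\Gamma'_{ij}(x_i,x_j)=\Gamma_{ij}(x_i,x_j)\sqrt{\Gamma_j(x_j)/\sum_x\Gamma_{ij}(x,x_j)}$ and $\Gamma'_j(x_j)=\Gamma_j(x_j)\sqrt{\sum_x\Gamma_{ij}(x,x_j)/\Gamma_j(x_j)}$. (d) If $\Gamma'=\mathcal P_{\mathcal X_{ij,j}}(\Gamma)$, then $\Gamma'_j=\Gamma_j/\sum_x\Gamma_j(x)$ and $\Gamma'_{ij}=\Gamma_{ij}/\sum_{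x_i,x_j}\Gamma_{ij}(x_i,x_j)$.
   Context: Let $G=(\mathcal V,\mathcal E)$ be a graph with $\mathcal V=\{1,\dots,n\}$, each edge written as an ordered pair $ij$, and $\chi=\{0,\dots,d-1\}$. A marginal vector $\Gamma$ consists of vectors $\Gamma_i\in\mathbb R^d$ ($i\in\mathcal V$, indexed $\Gamma_i(x)$) and matrices $\Gamma_{ij}\in\mathbb R^{d\times d}$ ($ij\in\mathcal E$, indexed $\Gamma_{ij}(x_i,x_j)$). Let $\Phi(\Gamma)=\sum\Gamma(\log\Gamma-1)$ summed over all entries, with Bregman divergence $\mathcal D_\Phi(P,Q)=\Phi(P)-\Phi(Q)-\langle\nabla\Phi(Q),P-Q\rangle$, and for a set $\mathcal X$ the Bregman projection $\mathcal P_{\mathcal X}(Q)=\arg\min_{P\in\mathcal X}\mathcal D_\Phi(P,Q)$. With $\mathbb 1$ the all-ones vector, define $\mathcal X_{ij\to i}=\{\Gamma:\Gamma_{ij}\mathbb 1=\Gamma_i\}$, $\mathcal X_{ij,i}=\{\Gamma:\Gamma_i^\top\mathbb 1=1,\ \mathbb 1^\top\Gamma_{ij}\mathbb 1=1\}$, $\mathcal X_{ij\to j}=\{\Gamma:\Gamma_{ij}^\top\mathbb 1=\Gamma_j\}$, $\mathcal X_{ij,j}=\{\Gamma:\Gamma_j^\top\mathbb 1=1,\ \mathbb 1^\top\Gamma_{ij}\mathbb 1=1\}$. *)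

theory Defs
  imports Complex_Main
begin

text \<open>A marginal vector: node vectors Gamma_i(x) (first component, indexed by node i and
  state x) and edge matrices Gamma_ij(x_i,x_j) (second component, indexed by the edge (i,j)
  and the states x_i, x_j).  Vertices are 1..n, states are 0..d-1.\<close>
type_synonym mvec = "(nat \<Rightarrow> nat \<Rightarrow> real) \<times> (nat \<times> nat \<Rightarrow> nat \<Rightarrow> nat \<Rightarrow> real)"

definition MV :: "nat \<Rightarrow> nat \<Rightarrow> (nat \<times> nat) set \<Rightarrow> mvec set" where
  "MV n d E = {G. (\<forall>i x. (i \<notin> {1..n} \<or> d \<le> x) \<longrightarrow> fst G i x = 0) \<and>
                  (\<forall>e x y. (e \<notin> E \<or> d \<le> x \<or> d \<le> y) \<longrightarrow> snd G e x y = 0)}"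

definition mv_pos :: "nat \<Rightarrow> nat \<Rightarrow> (nat \<times> nat) set \<Rightarrow> mvec \<Rightarrow> bool" where
  "mv_pos n d E G \<longleftrightarrow> (\<forall>i\<in>{1..n}. \<forall>x<d. 0 < fst G i x) \<and>
                        (\<forall>e\<in>E. \<forall>x<d. \<forall>y<d. 0 < snd G e x y)"

definition mv_nonneg :: "nat \<Rightarrow> nat \<Rightarrow> (nat \<times> nat) set \<Rightarrow> mvec \<Rightarrow> bool" where
  "mv_nonneg n d E G \<longleftrightarrow> (\<forall>i\<in>{1..n}. \<forall>x<d. 0 \<le> fst G i x) \<and>
                           (\<forall>e\<in>E. \<forall>x<d. \<forall>y<d. 0 \<le> snd G e x y)"

definition entry_sum :: "nat \<Rightarrow> nat \<Rightarrow> (nat \<times> nat) set \<Rightarrow> (real \<Rightarrow> real \<Rightarrow> real) \<Rightarrow> mvec \<Rightarrow> mvec \<Rightarrow> real" where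
  "entry_sum n d E f G H =
     (\<Sum>i\<in>{1..n}. \<Sum>x<d. f (fst G i x) (fst H i x)) +
     (\<Sum>e\<in>E. \<Sum>x<d. \<Sum>y<d. f (snd G e x y) (snd H e x y))"

text \<open>Phi(Gamma) = sum of Gamma (log Gamma - 1) over all entries (with ln 0 = 0, i.e. 0 log 0 = 0).\<close>
definition Phi :: "nat \<Rightarrow> nat \<Rightarrow> (nat \<times> nat) set \<Rightarrow> mvec \<Rightarrow> real" where
  "Phi n d E G = entry_sum n d E (\<lambda>a b. a * (ln a - 1)) G G"

definition grad_Phi :: "mvec \<Rightarrow> mvec" where
  "grad_Phi G = ((\<lambda>i x. ln (fst G i x)), (\<lambda>e x y. ln (snd G e x y)))"

definition mv_diff :: "mvec \<Rightarrow> mvec \<Rightarrow> mvec" where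
  "mv_diff P Q = ((\<lambda>i x. fst P i x - fst Q i x), (\<lambda>e x y. snd P e x y - snd Q e x y))"

definition mv_inner :: "nat \<Rightarrow> nat \<Rightarrow> (nat \<times> nat) set \<Rightarrow> mvec \<Rightarrow> mvec \<Rightarrow> real" where
  "mv_inner n d E G H = entry_sum n d E (\<lambda>a b. a * b) G H"

definition bregman_div :: "nat \<Rightarrow> nat \<Rightarrow> (nat \<times> nat) set \<Rightarrow> mvec \<Rightarrow> mvec \<Rightarrow> real" where
  "bregman_div n d E P Q = Phi n d E P - Phi n d E Q - mv_inner n d E (grad_Phi Q) (mv_diff P Q)"

definition bregman_proj :: "nat \<Rightarrow> nat \<Rightarrow> (nat \<times> nat) set \<Rightarrow> mvec set \<Rightarrow> mvec \<Rightarrow> mvec" where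
  "bregman_proj n d E X Q =
     (THE P. P \<in> X \<inter> MV n d E \<and> mv_nonneg n d E P \<and>
        (\<forall>R \<in> X \<inter> MV n d E. mv_nonneg n d E R \<longrightarrow> bregman_div n d E P Q \<le> bregman_div n d E R Q))"

definition X_to_i :: "nat \<Rightarrow> nat \<Rightarrow> nat \<Rightarrow> mvec set" where
  "X_to_i d i j = {G. \<forall>x<d. (\<Sum>y<d. snd G (i,j) x y) = fst G i x}"

definition X_norm_i :: "nat \<Rightarrow> nat \<Rightarrow> nat \<Rightarrow> mvec set" where
  "X_norm_i d i j = {G. (\<Sum>x<d. fst G i x) = 1 \<and> (\<Sum>x<d. \<Sum>y<d. snd G (i,j) x y) = 1}"

definition X_to_j :: "nat \<Rightarrow> nat \<Rightarrow> nat \<Rightarrow> mvec set" where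
  "X_to_j d i j = {G. \<forall>y<d. (\<Sum>x<d. snd G (i,j) x y) = fst G j y}"

definition X_norm_j :: "nat \<Rightarrow> nat \<Rightarrow> nat \<Rightarrow> mvec set" where
  "X_norm_j d i j = {G. (\<Sum>x<d. fst G j x) = 1 \<and> (\<Sum>x<d. \<Sum>y<d. snd G (i,j) x y) = 1}"

end

theory Submission
  imports Defs
begin

(* By the three-point identity
     D(R, G) = D(R, P) + D(P, G) + <ln P - ln G, R - P>,
   a positive P in an affine set X for which ln P - ln G is orthogonal to X - P satisfies
   D(R, G) >= D(P, G) for every R in X, with equality only for R = P; so P is the projection.
   For the normalisations (b) and (d), ln P - ln G is the constant -ln(total mass) on the node
   and on the edge, and both constraints fix the total mass. For (a), ln P - ln G is
   L(x_i) = ln(sum_x Gamma_ij(x_i, x) / Gamma_i(x_i)) / 2 at the node and -L(x_i) on row x_i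
   of the edge, which the marginal constraint annihilates; (c) is (a) for the transposed
   edge matrix. *)

definition kl_div :: "real \<Rightarrow> real \<Rightarrow> real" where
  "kl_div r q = r * (ln r - 1) - q * (ln q - 1) - ln q * (r - q)"

lemma kl_div_pos:
  assumes "0 \<le> r" "0 < q" "r \<noteq> q"
  shows "0 < kl_div r q"
proof (cases "r = 0")
  case True
  then show ?thesis using assms by (simp add: kl_div_def)
next
  case False
  with assms have r: "0 < r" and qr: "0 < q / r" "q / r \<noteq> 1" by auto
  have "ln (q / r) < q / r - 1"
    using qr ln_le_minus_one[of "q / r"] ln_eq_minus_one[of "q / r"] by fastforce
  then have "r * (ln q - ln r) < q - r"
    using r assms by (simp add: ln_divide_pos field_simps)
  then show ?thesis unfolding kl_div_def by (simp add: algebra_simps)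
qed

lemma kl_div_nonneg: "0 \<le> r \<Longrightarrow> 0 < q \<Longrightarrow> 0 \<le> kl_div r q"
  using kl_div_pos[of r q] by (cases "r = q") (auto simp: kl_div_def)

lemma kl_div_eq_0_iff: "0 \<le> r \<Longrightarrow> 0 < q \<Longrightarrow> kl_div r q = 0 \<longleftrightarrow> r = q"
  using kl_div_pos[of r q] by (cases "r = q") (auto simp: kl_div_def)

lemma bregman_div_eq_entry_sum_kl_div:
  "bregman_div n d E P Q = entry_sum n d E kl_div P Q"
  unfolding bregman_div_def Phi_def mv_inner_def entry_sum_def grad_Phi_def mv_diff_def kl_div_def
  by (simp add: sum_subtractf sum.distrib algebra_simps)

lemma bregman_div_nonneg:
  "mv_nonneg n d E R \<Longrightarrow> mv_pos n d E P \<Longrightarrow> 0 \<le> bregman_div n d E R P"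
  unfolding bregman_div_eq_entry_sum_kl_div entry_sum_def mv_nonneg_def mv_pos_def
  by (intro add_nonneg_nonneg sum_nonneg kl_div_nonneg) auto

lemma MV_eqI:
  assumes "R \<in> MV n d E" "P \<in> MV n d E"
    and "\<And>i x. i \<in> {1..n} \<Longrightarrow> x < d \<Longrightarrow> fst R i x = fst P i x"
    and "\<And>e x y. e \<in> E \<Longrightarrow> x < d \<Longrightarrow> y < d \<Longrightarrow> snd R e x y = snd P e x y"
  shows "R = P"
proof -
  have "fst R i x = fst P i x" for i x
    using assms unfolding MV_def by (cases "i \<in> {1..n} \<and> x < d") (auto simp: not_less)
  moreover have "snd R e x y = snd P e x y" for e x y
  proof (cases "e \<in> E \<and> x < d \<and> y < d")
    case False
    then have "e \<notin> E \<or> d \<le> x \<or> d \<le> y" by auto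
    then have "snd R e x y = 0" and "snd P e x y = 0"
      using assms(1,2) unfolding MV_def mem_Collect_eq by blast+
    then show ?thesis by simp
  qed (use assms in auto)
  ultimately show ?thesis by (simp add: prod_eq_iff ext)
qed

lemma bregman_div_eq_0_imp_eq:
  assumes "finite E" and R: "R \<in> MV n d E" "mv_nonneg n d E R"
    and P: "P \<in> MV n d E" "mv_pos n d E P" and zero: "bregman_div n d E R P = 0"
  shows "R = P"
proof (rule MV_eqI[OF R(1) P(1)])
  have node: "0 \<le> kl_div (fst R i x) (fst P i x)" if "i \<in> {1..n}" "x < d" for i x
    using R(2) P(2) that by (auto simp: mv_nonneg_def mv_pos_def intro: kl_div_nonneg)
  have edge: "0 \<le> kl_div (snd R e x y) (snd P e x y)" if "e \<in> E" "x < d" "y < d" for e x y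
    using R(2) P(2) that by (auto simp: mv_nonneg_def mv_pos_def intro: kl_div_nonneg)
  have "(\<Sum>i\<in>{1..n}. \<Sum>x<d. kl_div (fst R i x) (fst P i x)) = 0 \<and>
        (\<Sum>e\<in>E. \<Sum>x<d. \<Sum>y<d. kl_div (snd R e x y) (snd P e x y)) = 0"
    using zero unfolding bregman_div_eq_entry_sum_kl_div entry_sum_def
    by (subst add_nonneg_eq_0_iff[symmetric]) (auto intro!: sum_nonneg node edge)
  then have node_sum: "(\<Sum>i\<in>{1..n}. \<Sum>x<d. kl_div (fst R i x) (fst P i x)) = 0"
    and edge_sum: "(\<Sum>e\<in>E. \<Sum>x<d. \<Sum>y<d. kl_div (snd R e x y) (snd P e x y)) = 0"
    by auto
  show "fst R i x = fst P i x" if i: "i \<in> {1..n}" and x: "x < d" for i x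
  proof -
    have "(\<Sum>x<d. kl_div (fst R i x) (fst P i x)) = 0"
      by (rule sum_nonneg_0[OF _ _ node_sum i]) (auto intro!: sum_nonneg node)
    from sum_nonneg_0[where i = x, OF _ _ this] have "kl_div (fst R i x) (fst P i x) = 0"
      using i x node by auto
    then show ?thesis
      using i x R(2) P(2) by (simp add: kl_div_eq_0_iff mv_nonneg_def mv_pos_def)
  qed
  show "snd R e x y = snd P e x y" if e: "e \<in> E" and x: "x < d" and y: "y < d" for e x y
  proof -
    have "(\<Sum>x<d. \<Sum>y<d. kl_div (snd R e x y) (snd P e x y)) = 0"
      by (rule sum_nonneg_0[OF _ _ edge_sum e]) (auto intro!: sum_nonneg edge \<open>finite E\<close>)
    from sum_nonneg_0[where i = x, OF _ _ this] have "(\<Sum>y<d. kl_div (snd R e x y) (snd P e x y)) = 0"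
      using x edge[OF e] by (auto intro!: sum_nonneg)
    from sum_nonneg_0[where i = y, OF _ _ this] have "kl_div (snd R e x y) (snd P e x y) = 0"
      using x y edge[OF e] by auto
    then show ?thesis
      using e x y R(2) P(2) by (simp add: kl_div_eq_0_iff mv_nonneg_def mv_pos_def)
  qed
qed

lemma bregman_div_three_point:
  "bregman_div n d E R G = bregman_div n d E R P + bregman_div n d E P G +
     mv_inner n d E (mv_diff (grad_Phi P) (grad_Phi G)) (mv_diff R P)"
  unfolding bregman_div_def Phi_def mv_inner_def entry_sum_def grad_Phi_def mv_diff_def
  by (simp add: sum.distrib sum_subtractf algebra_simps)

(* The optimality condition for the projection of G onto an affine set X, at an interior point P. *)
definition bregman_orthogonal ::
    "nat \<Rightarrow> nat \<Rightarrow> (nat \<times> nat) set \<Rightarrow> mvec set \<Rightarrow> mvec \<Rightarrow> mvec \<Rightarrow> bool" where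
  "bregman_orthogonal n d E X G P \<longleftrightarrow> P \<in> X \<inter> MV n d E \<and> mv_pos n d E P \<and>
     (\<forall>R \<in> X \<inter> MV n d E. mv_nonneg n d E R \<longrightarrow>
        mv_inner n d E (mv_diff (grad_Phi P) (grad_Phi G)) (mv_diff R P) = 0)"

lemma mv_pos_imp_mv_nonneg: "mv_pos n d E P \<Longrightarrow> mv_nonneg n d E P"
  unfolding mv_pos_def mv_nonneg_def by (auto simp: less_imp_le)

lemma bregman_proj_eqI:
  assumes "finite E" and orth: "bregman_orthogonal n d E X G P"
  shows "bregman_proj n d E X G = P"
proof -
  have P: "P \<in> X \<inter> MV n d E" "mv_pos n d E P"
    using orth by (auto simp: bregman_orthogonal_def)
  have pythagoras: "bregman_div n d E R G = bregman_div n d E R P + bregman_div n d E P G"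
    if "R \<in> X \<inter> MV n d E" "mv_nonneg n d E R" for R
    using orth that bregman_div_three_point[of n d E R G P]
    by (simp add: bregman_orthogonal_def)
  show ?thesis
    unfolding bregman_proj_def
  proof (rule the_equality)
    show "P \<in> X \<inter> MV n d E \<and> mv_nonneg n d E P \<and>
      (\<forall>R\<in>X \<inter> MV n d E. mv_nonneg n d E R \<longrightarrow> bregman_div n d E P G \<le> bregman_div n d E R G)"
    proof (intro conjI ballI impI)
      fix R
      assume "R \<in> X \<inter> MV n d E" "mv_nonneg n d E R"
      with pythagoras[of R] bregman_div_nonneg[of n d E R P] P(2)
      show "bregman_div n d E P G \<le> bregman_div n d E R G" by linarith
    qed (use P mv_pos_imp_mv_nonneg in auto)
  next
    fix Q
    assume Q: "Q \<in> X \<inter> MV n d E \<and> mv_nonneg n d E Q \<and>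
      (\<forall>R\<in>X \<inter> MV n d E. mv_nonneg n d E R \<longrightarrow> bregman_div n d E Q G \<le> bregman_div n d E R G)"
    then have "bregman_div n d E Q G \<le> bregman_div n d E P G"
      using P mv_pos_imp_mv_nonneg by blast
    with Q pythagoras[of Q] have "bregman_div n d E Q P = 0"
      using bregman_div_nonneg[of n d E Q P] P(2) by linarith
    then show "Q = P"
      using bregman_div_eq_0_imp_eq[OF \<open>finite E\<close>] Q P by blast
  qed
qed

lemma mv_inner_grad_diff_update:
  assumes "finite E" "k \<in> {1..n}" "e \<in> E"
  shows "mv_inner n d E (mv_diff (grad_Phi ((fst G)(k := u), (snd G)(e := w))) (grad_Phi G)) H =
    (\<Sum>x<d. (ln (u x) - ln (fst G k x)) * fst H k x) +
    (\<Sum>x<d. \<Sum>y<d. (ln (w x y) - ln (snd G e x y)) * snd H e x y)"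
  using assms unfolding mv_inner_def entry_sum_def mv_diff_def grad_Phi_def
  by (subst sum.remove[of "{1..n}" k], simp_all add: sum.remove[of E e])

definition transpose_edge :: "nat \<times> nat \<Rightarrow> mvec \<Rightarrow> mvec" where
  "transpose_edge e G = (fst G, (snd G)(e := (\<lambda>x y. snd G e y x)))"

lemma transpose_edge_transpose_edge [simp]: "transpose_edge e (transpose_edge e G) = G"
  by (simp add: transpose_edge_def)

lemma transpose_edge_MV: "G \<in> MV n d E \<Longrightarrow> transpose_edge e G \<in> MV n d E"
  unfolding MV_def transpose_edge_def by auto

lemma mv_pos_transpose_edge: "mv_pos n d E G \<Longrightarrow> mv_pos n d E (transpose_edge e G)"
  unfolding mv_pos_def transpose_edge_def by auto

lemma mv_nonneg_transpose_edge: "mv_nonneg n d E G \<Longrightarrow> mv_nonneg n d E (transpose_edge e G)"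
  unfolding mv_nonneg_def transpose_edge_def by auto

lemma grad_Phi_transpose_edge: "grad_Phi (transpose_edge e G) = transpose_edge e (grad_Phi G)"
  by (auto simp: grad_Phi_def transpose_edge_def)

lemma mv_diff_transpose_edge:
  "mv_diff (transpose_edge e P) (transpose_edge e Q) = transpose_edge e (mv_diff P Q)"
  by (auto simp: mv_diff_def transpose_edge_def)

lemma entry_sum_transpose_edge:
  "entry_sum n d E f (transpose_edge e G) (transpose_edge e H) = entry_sum n d E f G H"
proof -
  have "(\<Sum>x<d. \<Sum>y<d. f (snd (transpose_edge e G) e' x y) (snd (transpose_edge e H) e' x y)) =
      (\<Sum>x<d. \<Sum>y<d. f (snd G e' x y) (snd H e' x y))" for e'
    using sum.swap[of "\<lambda>y x. f (snd G e x y) (snd H e x y)" "{..<d}" "{..<d}"]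
    by (simp add: transpose_edge_def)
  then show ?thesis
    unfolding entry_sum_def by (simp add: transpose_edge_def)
qed

lemma mv_inner_transpose_edge:
  "mv_inner n d E (transpose_edge e A) (transpose_edge e B) = mv_inner n d E A B"
  unfolding mv_inner_def by (rule entry_sum_transpose_edge)

lemma bregman_orthogonal_transpose_edge:
  assumes "bregman_orthogonal n d E X G P"
  shows "bregman_orthogonal n d E {R. transpose_edge e R \<in> X} (transpose_edge e G) (transpose_edge e P)"
  unfolding bregman_orthogonal_def
proof (intro conjI ballI impI)
  fix R
  assume "R \<in> {R. transpose_edge e R \<in> X} \<inter> MV n d E" "mv_nonneg n d E R"
  then have "mv_inner n d E (mv_diff (grad_Phi P) (grad_Phi G))
      (mv_diff (transpose_edge e R) P) = 0"
    using assms transpose_edge_MV mv_nonneg_transpose_edge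
    unfolding bregman_orthogonal_def by blast
  moreover have "mv_diff R (transpose_edge e P) = transpose_edge e (mv_diff (transpose_edge e R) P)"
    using mv_diff_transpose_edge[of e "transpose_edge e R" P] by simp
  ultimately show "mv_inner n d E (mv_diff (grad_Phi (transpose_edge e P)) (grad_Phi (transpose_edge e G)))
      (mv_diff R (transpose_edge e P)) = 0"
    by (simp add: grad_Phi_transpose_edge mv_diff_transpose_edge mv_inner_transpose_edge)
qed (use assms transpose_edge_MV mv_pos_transpose_edge in \<open>auto simp: bregman_orthogonal_def\<close>)

lemma mult_sqrt_divide_eq:
  fixes a b :: real
  assumes "0 < a"
  shows "a * sqrt (b / a) = sqrt (a * b)"
proof -
  have "a * sqrt (b / a) = sqrt (a\<^sup>2) * sqrt (b / a)"
    using assms by simp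
  also have "\<dots> = sqrt (a\<^sup>2 * (b / a))"
    by (rule real_sqrt_mult[symmetric])
  also have "\<dots> = sqrt (a * b)"
    using assms by (simp add: power2_eq_square)
  finally show ?thesis .
qed

lemma bregman_orthogonal_row_marginal:
  assumes "finite E" and G: "G \<in> MV n d E" "mv_pos n d E G" and k: "k \<in> {1..n}" and e: "e \<in> E"
  defines "S \<equiv> \<lambda>x. \<Sum>y<d. snd G e x y"
  shows "bregman_orthogonal n d E {R. \<forall>x<d. (\<Sum>y<d. snd R e x y) = fst R k x} G
     ((fst G)(k := (\<lambda>x. fst G k x * sqrt (S x / fst G k x))),
      (snd G)(e := (\<lambda>x y. snd G e x y * sqrt (fst G k x / S x))))"
    (is "bregman_orthogonal n d E ?X G ?P")
proof -
  have node_pos: "0 < fst G k x" if "x < d" for x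
    using G(2) k that by (simp add: mv_pos_def)
  have edge_pos: "0 < snd G e x y" if "x < d" "y < d" for x y
    using G(2) e that by (simp add: mv_pos_def)
  have S_pos: "0 < S x" if "x < d" for x
    unfolding S_def using that edge_pos by (intro sum_pos) auto
  define L where "L x = ln (S x / fst G k x) / 2" for x
  have P_in_X: "?P \<in> ?X"
    using node_pos S_pos by (simp add: S_def mult_sqrt_divide_eq mult.commute flip: sum_distrib_right)
  have "?P \<in> MV n d E"
    using G(1) k e unfolding MV_def by auto
  moreover have "mv_pos n d E ?P"
    using G(2) node_pos S_pos unfolding mv_pos_def by auto
  moreover have "mv_inner n d E (mv_diff (grad_Phi ?P) (grad_Phi G)) (mv_diff R ?P) = 0"
    if R: "R \<in> ?X" for R
  proof -
    have node_log: "ln (fst G k x * sqrt (S x / fst G k x)) = ln (fst G k x) + L x"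
      if "x < d" for x
      using node_pos[OF that] S_pos[OF that] by (simp add: L_def ln_mult ln_sqrt)
    have edge_log: "ln (snd G e x y * sqrt (fst G k x / S x)) = ln (snd G e x y) - L x"
      if "x < d" "y < d" for x y
      using node_pos[OF that(1)] S_pos[OF that(1)] edge_pos[OF that]
      by (simp add: L_def ln_mult ln_sqrt ln_div field_simps)
    have marginal: "(\<Sum>y<d. snd R e x y - snd ?P e x y) = fst R k x - fst ?P k x" if "x < d" for x
      using R P_in_X that by (simp add: sum_subtractf)
    have "(\<Sum>x<d. \<Sum>y<d. (ln (snd ?P e x y) - ln (snd G e x y)) * (snd R e x y - snd ?P e x y))
        = (\<Sum>x<d. - L x * (\<Sum>y<d. snd R e x y - snd ?P e x y))"
      by (intro sum.cong refl) (simp add: edge_log sum_distrib_left)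
    also have "\<dots> = (\<Sum>x<d. - (L x * (fst R k x - fst ?P k x)))"
      by (intro sum.cong refl) (use marginal in simp)
    finally have edge_part: "(\<Sum>x<d. \<Sum>y<d.
        (ln (snd ?P e x y) - ln (snd G e x y)) * (snd R e x y - snd ?P e x y))
        = - (\<Sum>x<d. L x * (fst R k x - fst ?P k x))"
      by (simp add: sum_negf)
    have "(\<Sum>x<d. (ln (fst ?P k x) - ln (fst G k x)) * (fst R k x - fst ?P k x))
        = (\<Sum>x<d. L x * (fst R k x - fst ?P k x))"
      by (simp add: node_log)
    with edge_part show ?thesis
      unfolding mv_inner_grad_diff_update[OF \<open>finite E\<close> k e] by (simp add: mv_diff_def)
  qed
  ultimately show ?thesis
    using P_in_X unfolding bregman_orthogonal_def by blast
qed

lemma bregman_orthogonal_column_marginal: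
  assumes "finite E" and G: "G \<in> MV n d E" "mv_pos n d E G" and k: "k \<in> {1..n}" and e: "e \<in> E"
  defines "S \<equiv> \<lambda>y. \<Sum>x<d. snd G e x y"
  shows "bregman_orthogonal n d E {R. \<forall>y<d. (\<Sum>x<d. snd R e x y) = fst R k y} G
     ((fst G)(k := (\<lambda>y. fst G k y * sqrt (S y / fst G k y))),
      (snd G)(e := (\<lambda>x y. snd G e x y * sqrt (fst G k y / S y))))"
  using bregman_orthogonal_transpose_edge[OF bregman_orthogonal_row_marginal[OF \<open>finite E\<close>
      transpose_edge_MV[where e = e, OF G(1)] mv_pos_transpose_edge[where e = e, OF G(2)] k e], of e]
  by (simp add: S_def transpose_edge_def)

lemma bregman_orthogonal_normalise:
  assumes "finite E" and G: "G \<in> MV n d E" "mv_pos n d E G" and k: "k \<in> {1..n}" and e: "e \<in> E"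
    and "0 < d"
  defines "s \<equiv> \<Sum>x<d. fst G k x" and "t \<equiv> \<Sum>x<d. \<Sum>y<d. snd G e x y"
  shows "bregman_orthogonal n d E
     {R. (\<Sum>x<d. fst R k x) = 1 \<and> (\<Sum>x<d. \<Sum>y<d. snd R e x y) = 1} G
     ((fst G)(k := (\<lambda>x. fst G k x / s)), (snd G)(e := (\<lambda>x y. snd G e x y / t)))"
    (is "bregman_orthogonal n d E ?X G ?P")
proof -
  have node_pos: "0 < fst G k x" if "x < d" for x
    using G(2) k that by (simp add: mv_pos_def)
  have edge_pos: "0 < snd G e x y" if "x < d" "y < d" for x y
    using G(2) e that by (simp add: mv_pos_def)
  have s_pos: "0 < s"
    unfolding s_def using \<open>0 < d\<close> node_pos by (intro sum_pos) auto
  have t_pos: "0 < t"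
    unfolding t_def using \<open>0 < d\<close> edge_pos by (intro sum_pos sum_pos) auto
  have P_in_X: "?P \<in> ?X"
    using s_pos t_pos by (simp add: s_def t_def flip: sum_divide_distrib)
  have "?P \<in> MV n d E"
    using G(1) k e unfolding MV_def by auto
  moreover have "mv_pos n d E ?P"
    using G(2) s_pos t_pos unfolding mv_pos_def by auto
  moreover have "mv_inner n d E (mv_diff (grad_Phi ?P) (grad_Phi G)) (mv_diff R ?P) = 0"
    if R: "R \<in> ?X" for R
  proof -
    have "(\<Sum>x<d. (ln (fst G k x / s) - ln (fst G k x)) * (fst R k x - fst G k x / s))
        = (\<Sum>x<d. - ln s * (fst R k x - fst G k x / s))"
      by (intro sum.cong refl) (simp add: node_pos s_pos ln_divide_pos)
    also have "\<dots> = - ln s * ((\<Sum>x<d. fst R k x) - (\<Sum>x<d. fst G k x / s))"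
      by (simp add: sum_negf sum_distrib_left sum_subtractf right_diff_distrib)
    also have "\<dots> = 0"
      using R P_in_X by simp
    finally have node_part:
      "(\<Sum>x<d. (ln (fst G k x / s) - ln (fst G k x)) * (fst R k x - fst G k x / s)) = 0" .
    have "(\<Sum>x<d. \<Sum>y<d. (ln (snd G e x y / t) - ln (snd G e x y)) * (snd R e x y - snd G e x y / t))
        = (\<Sum>x<d. \<Sum>y<d. - ln t * (snd R e x y - snd G e x y / t))"
      by (intro sum.cong refl) (simp add: edge_pos t_pos ln_divide_pos)
    also have "\<dots> = - ln t * ((\<Sum>x<d. \<Sum>y<d. snd R e x y) - (\<Sum>x<d. \<Sum>y<d. snd G e x y / t))"
      by (simp add: sum_negf sum_distrib_left sum_subtractf right_diff_distrib)
    also have "\<dots> = 0"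
      using R P_in_X by simp
    finally have edge_part: "(\<Sum>x<d. \<Sum>y<d.
        (ln (snd G e x y / t) - ln (snd G e x y)) * (snd R e x y - snd G e x y / t)) = 0" .
    show ?thesis
      unfolding mv_inner_grad_diff_update[OF \<open>finite E\<close> k e] using node_part edge_part
      by (simp add: mv_diff_def)
  qed
  ultimately show ?thesis
    using P_in_X unfolding bregman_orthogonal_def by blast
qed

theorem proposition1:
  fixes n d :: nat and E :: "(nat \<times> nat) set" and G :: mvec and i j :: nat
  assumes graph: "E \<subseteq> {1..n} \<times> {1..n}" and noloops: "\<forall>v. (v, v) \<notin> E"
    and d_pos: "0 < d"
    and G_mv: "G \<in> MV n d E" and G_pos: "mv_pos n d E G"
    and edge: "(i, j) \<in> E"
  shows
   "(bregman_proj n d E (X_to_i d i j) G =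
      ((fst G)(i := (\<lambda>x. fst G i x * sqrt ((\<Sum>y<d. snd G (i,j) x y) / fst G i x))),
       (snd G)((i,j) := (\<lambda>x y. snd G (i,j) x y * sqrt (fst G i x / (\<Sum>z<d. snd G (i,j) x z)))))) \<and>
   (bregman_proj n d E (X_norm_i d i j) G =
      ((fst G)(i := (\<lambda>x. fst G i x / (\<Sum>z<d. fst G i z))),
       (snd G)((i,j) := (\<lambda>x y. snd G (i,j) x y / (\<Sum>a<d. \<Sum>b<d. snd G (i,j) a b))))) \<and>
   (bregman_proj n d E (X_to_j d i j) G =
      ((fst G)(j := (\<lambda>y. fst G j y * sqrt ((\<Sum>x<d. snd G (i,j) x y) / fst G j y))),
       (snd G)((i,j) := (\<lambda>x y. snd G (i,j) x y * sqrt (fst G j y / (\<Sum>z<d. snd G (i,j) z y)))))) \<and>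
   (bregman_proj n d E (X_norm_j d i j) G =
      ((fst G)(j := (\<lambda>y. fst G j y / (\<Sum>z<d. fst G j z))),
       (snd G)((i,j) := (\<lambda>x y. snd G (i,j) x y / (\<Sum>a<d. \<Sum>b<d. snd G (i,j) a b)))))"
proof -
  have fin: "finite E"
    using graph by (rule finite_subset) simp
  have i: "i \<in> {1..n}" and j: "j \<in> {1..n}"
    using graph edge by auto
  show ?thesis
    using bregman_proj_eqI[OF fin bregman_orthogonal_row_marginal[OF fin G_mv G_pos i edge]]
      bregman_proj_eqI[OF fin bregman_orthogonal_normalise[OF fin G_mv G_pos i edge d_pos]]
      bregman_proj_eqI[OF fin bregman_orthogonal_column_marginal[OF fin G_mv G_pos j edge]]
      bregman_proj_eqI[OF fin bregman_orthogonal_normalise[OF fin G_mv G_pos j edge d_pos]]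
    unfolding X_to_i_def X_norm_i_def X_to_j_def X_norm_j_def by simp
qed

end
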